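(* Let $l:\mathbb{R}^p\to\mathbb{R}$ be convex and differentiable, let $\lambda_1\ge\dots\ge\lambda_p\ge0$ be arbitrary, and let $\hat b$ be a minimizer of $l(b)+\sum_{i=1}^p\lambda_i|b|_{(i)}$. Let $U(b)=-\nabla l(b)$. If $|\hat b_j|>|\hat b_k|$, then $|U_j(\hat b)|\ge|U_k(\hat b)|$.
   Context: $|b|_{(1)}\ge\dots\ge|b|_{(p)}$ denote the ordered absolute values of the entries of $b\in\mathbb{R}^p$. *)

theory Defs
  imports "HOL-Analysis.Analysis" "HOL-Library.Multiset"
begin

text \<open>Ordered absolute values of a vector b in R^p, largest first:
  ordered_abs b ! 0 = |b|_(1) >= ... >= ordered_abs b ! (p-1) = |b|_(p).\<close>
definition ordered_abs :: "real ^ 'p \<Rightarrow> real list" where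
  "ordered_abs b = rev (sorted_list_of_multiset (image_mset (\<lambda>j. \<bar>b $ j\<bar>) (mset_set (UNIV :: 'p set))))"

text \<open>Sorted-L1 (SLOPE) penalty  sum_{i=1}^p lambda_i |b|_(i), with lambda_i stored as lam (i-1).\<close>
definition slope_pen :: "(nat \<Rightarrow> real) \<Rightarrow> real ^ 'p \<Rightarrow> real" where
  "slope_pen lam b = (\<Sum>i<CARD('p). lam i * ordered_abs b ! i)"

end

theory Submission
  imports Defs
begin

text \<open>Suppose \<open>|b\<^sub>j| > |b\<^sub>k|\<close> but \<open>|g\<^sub>j| < |g\<^sub>k|\<close> for \<open>g = \<nabla>l(b)\<close>. Moving from \<open>b\<close> in the direction
  \<open>e = -sgn(g\<^sub>k) e\<^sub>k - sgn(b\<^sub>j) e\<^sub>j\<close> has slope \<open>g \<bullet> e \<le> |g\<^sub>j| - |g\<^sub>k| < 0\<close>, so \<open>l\<close> strictly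
  decreases for small steps \<open>t\<close>. A step \<open>t \<le> |b\<^sub>j| - |b\<^sub>k|\<close> lowers \<open>|b\<^sub>j|\<close> by exactly \<open>t\<close> and
  raises \<open>|b\<^sub>k|\<close> by at most \<open>t\<close>: this transfer of mass from a larger to a smaller absolute
  value cannot increase the sorted-L1 penalty, by the rearrangement inequality for the
  decreasing weights \<open>\<lambda>\<close>. This contradicts minimality of \<open>b\<close>.\<close>

lemma weighted_sum_list_update:
  fixes w :: "nat \<Rightarrow> 'a::comm_ring"
  assumes "q < length xs"
  shows "(\<Sum>i<length xs. w i * xs[q := v] ! i) = (\<Sum>i<length xs. w i * xs ! i) + w q * (v - xs ! q)"
proof -
  have "(\<Sum>i<length xs. w i * xs[q := v] ! i)
      = (\<Sum>i<length xs. w i * xs ! i + (if i = q then w q * (v - xs ! q) else 0))"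
    by (intro sum.cong) (auto simp: nth_list_update algebra_simps)
  then show ?thesis
    using assms by (simp add: sum.distrib)
qed

lemma weighted_sum_le_sorted_desc:
  fixes s c :: "'a::linordered_idom list"
  assumes "mset c = mset s" and "sorted_wrt (\<ge>) s"
    and "\<And>i i'. i \<le> i' \<Longrightarrow> i' < length s \<Longrightarrow> w i' \<le> w i"
  shows "(\<Sum>i<length s. w i * c ! i) \<le> (\<Sum>i<length s. w i * s ! i)"
  using assms
proof (induction s arbitrary: c w)
  case Nil
  then show ?case by simp
next
  case (Cons x s)
  have len: "length c = Suc (length s)"
    using Cons.prems(1) by (metis length_Cons mset_eq_length)
  obtain q where q: "q < length c" "c ! q = x"
    using Cons.prems(1) by (metis in_set_conv_nth list.set_intros(1) mset_eq_setD)
  define c' where "c' = c[0 := x, q := c ! 0]"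
  have "c' ! 0 = x"
    using q len by (cases "q = 0") (auto simp: c'_def)
  moreover have "c' \<noteq> []"
    using len by (auto simp: c'_def)
  ultimately obtain cs where c': "c' = x # cs"
    by (metis list.exhaust nth_Cons_0)
  have "mset c' = mset c"
    using mset_swap[of q c 0] q len unfolding c'_def by simp
  then have "mset cs = mset s"
    using Cons.prems(1) c' by simp
  then have IH: "(\<Sum>i<length s. w (Suc i) * cs ! i) \<le> (\<Sum>i<length s. w (Suc i) * s ! i)"
    using Cons.prems(2,3) by (intro Cons.IH) auto
  have "c ! 0 \<in> set (x # s)"
    using Cons.prems(1) len by (metis mset_eq_setD nth_mem zero_less_Suc)
  then have x_max: "c ! 0 \<le> x"
    using Cons.prems(2) by auto
  have "w q \<le> w 0"
    using Cons.prems(3) q len by simp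
  then have swap_gain: "0 \<le> (w 0 - w q) * (x - c ! 0)"
    using x_max by simp
  have "c[0 := x] ! q = x"
    using q len by (simp add: nth_list_update)
  then have "(\<Sum>i<length c. w i * c' ! i) = (\<Sum>i<length c. w i * c[0 := x] ! i) + w q * (c ! 0 - x)"
    using weighted_sum_list_update[of q "c[0 := x]" w "c ! 0"] q unfolding c'_def by simp
  also have "\<dots> = (\<Sum>i<length c. w i * c ! i) + (w 0 - w q) * (x - c ! 0)"
    using weighted_sum_list_update[of 0 c w x] len by (simp add: algebra_simps)
  finally have "(\<Sum>i<length c. w i * c ! i) \<le> (\<Sum>i<length c. w i * c' ! i)"
    using swap_gain by simp
  also have "\<dots> = w 0 * x + (\<Sum>i<length s. w (Suc i) * cs ! i)"
    unfolding len sum.lessThan_Suc_shift by (simp add: c')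
  also have "\<dots> \<le> w 0 * x + (\<Sum>i<length s. w (Suc i) * s ! i)"
    using IH by simp
  also have "\<dots> = (\<Sum>i<length (x # s). w i * (x # s) ! i)"
    unfolding length_Cons sum.lessThan_Suc_shift by simp
  finally show ?case
    using len by simp
qed

lemma mset_eq_add_mset_add_mset_positions:
  assumes "mset xs = add_mset u (add_mset v M)"
  obtains p q where "p < length xs" "q < length xs" "p \<noteq> q" "xs ! p = u" "xs ! q = v"
proof -
  have "image_mset ((!) xs) (mset [0..<length xs]) = add_mset u (add_mset v M)"
    using assms by (metis map_nth mset_map)
  then obtain I p q where I: "mset [0..<length xs] = add_mset p (add_mset q I)"
    and "xs ! p = u" "xs ! q = v"
    using msed_map_invR[of "(!) xs"] by (metis image_mset_add_mset)
  moreover have "p \<in> {0..<length xs}" "q \<in> {0..<length xs}"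
    using arg_cong[OF I, of set_mset] by simp_all
  moreover have "p \<noteq> q"
  proof
    assume "p = q"
    then have "count (mset [0..<length xs]) p \<ge> 2"
      using I by simp
    then show False
      by (simp add: count_mset_set' split: if_splits)
  qed
  ultimately show thesis
    using that by auto
qed

lemma transfer_exchange_le:
  fixes \<alpha> \<beta> :: "'a::linordered_idom"
  assumes "0 \<le> \<beta>" "\<beta> \<le> \<alpha>" "0 \<le> t" "t \<le> a - c" "v \<le> c + t"
  shows "\<alpha> * (a - t) + \<beta> * v \<le> \<alpha> * a + \<beta> * c"
    and "\<alpha> * v + \<beta> * (a - t) \<le> \<alpha> * a + \<beta> * c"
proof -
  have "\<beta> * v \<le> \<beta> * (c + t)" "\<alpha> * v \<le> \<alpha> * (c + t)"
    using assms by (simp_all add: mult_left_mono)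
  moreover have "\<beta> * t \<le> \<alpha> * t" "\<beta> * (a - c - t) \<le> \<alpha> * (a - c - t)"
    using assms by (simp_all add: mult_right_mono)
  ultimately show "\<alpha> * (a - t) + \<beta> * v \<le> \<alpha> * a + \<beta> * c"
    and "\<alpha> * v + \<beta> * (a - t) \<le> \<alpha> * a + \<beta> * c"
    by (simp_all add: algebra_simps)
qed

lemma weighted_sum_transfer_le_sorted:
  fixes s s' :: "'a::linordered_idom list"
  assumes s': "mset s' = add_mset (a - t) (add_mset v R)"
    and s: "mset s = add_mset a (add_mset c R)" "sorted_wrt (\<ge>) s"
    and w_antimono: "\<And>i i'. i \<le> i' \<Longrightarrow> i' < length s \<Longrightarrow> w i' \<le> w i"
    and w_nonneg: "\<And>i. i < length s \<Longrightarrow> 0 \<le> w i"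
    and transfer: "0 \<le> t" "t \<le> a - c" "v \<le> c + t"
  shows "(\<Sum>i<length s. w i * s' ! i) \<le> (\<Sum>i<length s. w i * s ! i)"
proof -
  have len: "length s' = length s"
    using s s' by (metis mset_eq_length size_mset size_add_mset)
  obtain p q where pq: "p < length s'" "q < length s'" "p \<noteq> q" "s' ! p = a - t" "s' ! q = v"
    using mset_eq_add_mset_add_mset_positions[OF s'] .
  \<comment> \<open>Put \<open>a\<close> into the earlier and \<open>c\<close> into the later of the slots holding \<open>a - t\<close> and \<open>v\<close>;
    this gives a rearrangement of \<open>s\<close>.\<close>
  define lo hi where "lo = min p q" and "hi = max p q"
  have lo_hi: "lo < hi" "hi < length s"
    using pq len by (auto simp: lo_def hi_def)
  have exchange: "w lo * s' ! lo + w hi * s' ! hi \<le> w lo * a + w hi * c"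
  proof -
    have "0 \<le> w hi" "w hi \<le> w lo"
      using lo_hi w_antimono w_nonneg by simp_all
    then show ?thesis
      using transfer_exchange_le[of "w hi" "w lo" t a c v] transfer pq
      by (cases "p < q") (auto simp: lo_def hi_def)
  qed
  define s'' where "s'' = s'[lo := a, hi := c]"
  have "(\<Sum>i<length s. w i * s'' ! i) = (\<Sum>i<length s. w i * s' ! i) + w lo * (a - s' ! lo) + w hi * (c - s' ! hi)"
    using weighted_sum_list_update[of hi "s'[lo := a]" w c] weighted_sum_list_update[of lo s' w a] lo_hi len
    by (simp add: s''_def nth_list_update)
  then have "(\<Sum>i<length s. w i * s' ! i) \<le> (\<Sum>i<length s. w i * s'' ! i)"
    using exchange by (simp add: algebra_simps)
  also have "\<dots> \<le> (\<Sum>i<length s. w i * s ! i)"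
  proof (rule weighted_sum_le_sorted_desc[OF _ s(2) w_antimono])
    show "mset s'' = mset s"
      using lo_hi len pq s s' by (auto simp: s''_def mset_update nth_list_update lo_def hi_def min_def max_def add_mset_commute)
  qed
  finally show ?thesis .
qed

lemma mset_ordered_abs:
  "mset (ordered_abs b) = image_mset (\<lambda>i. \<bar>b $ i\<bar>) (mset_set UNIV)"
  by (simp add: ordered_abs_def)

lemma length_ordered_abs: "length (ordered_abs (b :: real ^ 'p)) = CARD('p)"
  by (metis mset_ordered_abs size_image_mset size_mset size_mset_set)

lemma sorted_ordered_abs: "sorted_wrt (\<ge>) (ordered_abs b)"
  by (simp add: ordered_abs_def sorted_wrt_rev)

lemma mset_ordered_abs_split:
  assumes "j \<noteq> k"
  shows "mset (ordered_abs b) =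
    add_mset \<bar>b $ j\<bar> (add_mset \<bar>b $ k\<bar> (image_mset (\<lambda>i. \<bar>b $ i\<bar>) (mset_set (- {j, k}))))"
proof -
  have "mset_set UNIV = mset_set (insert j (insert k (- {j, k})))"
    by (rule arg_cong[where f = mset_set]) auto
  also have "\<dots> = add_mset j (add_mset k (mset_set (- {j, k})))"
    using assms by simp
  finally show ?thesis
    unfolding mset_ordered_abs by simp
qed

lemma slope_pen_transfer_le:
  fixes b :: "real ^ 'p" and lam :: "nat \<Rightarrow> real"
  assumes "j \<noteq> k" and "0 \<le> t" "t \<le> \<bar>b $ j\<bar> - \<bar>b $ k\<bar>" and "\<bar>\<sigma>\<bar> \<le> 1"
    and lam_antimono: "\<And>i i'. i \<le> i' \<Longrightarrow> i' < CARD('p) \<Longrightarrow> lam i' \<le> lam i"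
    and lam_nonneg: "\<And>i. i < CARD('p) \<Longrightarrow> 0 \<le> lam i"
  shows "slope_pen lam (b + t *\<^sub>R (axis k \<sigma> - axis j (sgn (b $ j)))) \<le> slope_pen lam b"
proof -
  define b' where "b' = b + t *\<^sub>R (axis k \<sigma> - axis j (sgn (b $ j)))"
  define R where "R = image_mset (\<lambda>i. \<bar>b $ i\<bar>) (mset_set (- {j, k}))"
  have "\<bar>b' $ j\<bar> = \<bar>b $ j\<bar> - t"
    using assms(1-3) by (cases "b $ j" "0::real" rule: linorder_cases) (auto simp: b'_def axis_def sgn_if)
  moreover have "image_mset (\<lambda>i. \<bar>b' $ i\<bar>) (mset_set (- {j, k})) = R"
    unfolding R_def by (intro image_mset_cong) (simp add: b'_def axis_def)
  ultimately have s': "mset (ordered_abs b') = add_mset (\<bar>b $ j\<bar> - t) (add_mset \<bar>b' $ k\<bar> R)"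
    using mset_ordered_abs_split[OF assms(1), of b'] by simp
  have s: "mset (ordered_abs b) = add_mset \<bar>b $ j\<bar> (add_mset \<bar>b $ k\<bar> R)"
    unfolding R_def by (rule mset_ordered_abs_split[OF assms(1)])
  have "\<bar>t * \<sigma>\<bar> \<le> t"
    using assms(2,4) by (simp add: abs_mult mult_left_le)
  then have "\<bar>b' $ k\<bar> \<le> \<bar>b $ k\<bar> + t"
    using assms(1) abs_triangle_ineq[of "b $ k" "t * \<sigma>"] by (simp add: b'_def axis_def)
  then have "(\<Sum>i<length (ordered_abs b). lam i * ordered_abs b' ! i)
      \<le> (\<Sum>i<length (ordered_abs b). lam i * ordered_abs b ! i)"
    using assms(2,3) lam_antimono lam_nonneg
    by (intro weighted_sum_transfer_le_sorted[OF s' s sorted_ordered_abs])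
      (simp_all add: length_ordered_abs)
  then show ?thesis
    by (simp add: slope_pen_def b'_def length_ordered_abs)
qed

lemma has_derivative_descent_direction:
  fixes f :: "'a::real_normed_vector \<Rightarrow> real"
  assumes "(f has_derivative f') (at x)" and "f' v < 0"
  obtains d where "0 < d" "\<And>t. 0 < t \<Longrightarrow> t < d \<Longrightarrow> f (x + t *\<^sub>R v) < f x"
proof -
  have "((\<lambda>t. x + t *\<^sub>R v) has_derivative (\<lambda>t. t *\<^sub>R v)) (at 0)"
    by (auto intro!: derivative_eq_intros)
  moreover have "(f has_derivative f') (at ((\<lambda>t. x + t *\<^sub>R v) 0))"
    using assms(1) by simp
  ultimately have "((\<lambda>t. f (x + t *\<^sub>R v)) has_derivative (\<lambda>t. f' (t *\<^sub>R v))) (at 0)"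
    by (rule has_derivative_compose)
  then have "((\<lambda>t. f (x + t *\<^sub>R v)) has_real_derivative f' v) (at 0)"
    by (rule has_derivative_imp_has_field_derivative)
      (simp add: linear_scale[OF has_derivative_linear[OF assms(1)]])
  with assms(2) show thesis
    using that by (auto dest!: DERIV_neg_dec_right)
qed

theorem proposition3:
  fixes l :: "real ^ 'p \<Rightarrow> real"
    and grad :: "real ^ 'p \<Rightarrow> real ^ 'p"
    and lam :: "nat \<Rightarrow> real"
    and bhat :: "real ^ 'p"
    and j k :: 'p
  assumes convex: "convex_on UNIV l"
    and grad: "\<And>b. (l has_derivative (\<lambda>h. grad b \<bullet> h)) (at b)"
    and lam_mono: "\<And>i i'. i \<le> i' \<Longrightarrow> i' < CARD('p) \<Longrightarrow> lam i' \<le> lam i"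
    and lam_nonneg: "\<And>i. i < CARD('p) \<Longrightarrow> 0 \<le> lam i"
    and minimizer: "\<And>b. l bhat + slope_pen lam bhat \<le> l b + slope_pen lam b"
    and gt: "\<bar>bhat $ j\<bar> > \<bar>bhat $ k\<bar>"
  shows "\<bar>(- grad bhat) $ j\<bar> \<ge> \<bar>(- grad bhat) $ k\<bar>"
proof (rule ccontr)
  define g where "g = grad bhat"
  assume "\<not> ?thesis"
  then have g_less: "\<bar>g $ j\<bar> < \<bar>g $ k\<bar>"
    by (simp add: g_def)
  have "j \<noteq> k"
    using gt by auto
  define e where "e = axis k (- sgn (g $ k)) - axis j (sgn (bhat $ j))"
  have "g \<bullet> e = - (g $ k * sgn (g $ k)) - g $ j * sgn (bhat $ j)"
    by (simp add: e_def inner_diff_right inner_axis)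
  also have "\<dots> \<le> - \<bar>g $ k\<bar> + \<bar>g $ j\<bar>"
    by (cases "bhat $ j" "0::real" rule: linorder_cases) (auto simp: sgn_if)
  also have "\<dots> < 0"
    using g_less by simp
  finally obtain d where d: "0 < d" "\<And>t. 0 < t \<Longrightarrow> t < d \<Longrightarrow> l (bhat + t *\<^sub>R e) < l bhat"
    using has_derivative_descent_direction[OF grad[of bhat]] by (metis g_def)
  define t where "t = min (d / 2) (\<bar>bhat $ j\<bar> - \<bar>bhat $ k\<bar>)"
  have t: "0 < t" "t < d" "t \<le> \<bar>bhat $ j\<bar> - \<bar>bhat $ k\<bar>"
    using d(1) gt by (auto simp: t_def)
  have "slope_pen lam (bhat + t *\<^sub>R e) \<le> slope_pen lam bhat"
    unfolding e_def using \<open>j \<noteq> k\<close> t lam_mono lam_nonneg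
    by (intro slope_pen_transfer_le) (auto simp: abs_sgn_eq)
  with d(2)[OF t(1,2)] minimizer[of "bhat + t *\<^sub>R e"] show False
    by linarith
qed

end
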